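(* A matrix $H_0\in\mathbb{C}^{3\times 3}$ is Hermitian, positive semidefinite and satisfies $H_0 H_0^T = 0_{3\times3}$ if and only if either $H_0=0$ or there exist $a,b,c\in\mathbb{R}$, not all zero, such that, with $x=\sqrt{a^2+b^2+c^2}$, $$H_0=\frac{1}{x}\begin{pmatrix} a^2+b^2 & bc+iax & -ac+ibx\\ bc-iax & a^2+c^2 & ab+icx\\ -ac-ibx & ab-icx & b^2+c^2\end{pmatrix}.$$
   Context: $^T$ denotes transpose (no conjugation). *)

theory Defs
  imports "HOL-Analysis.Analysis"
begin

definition conj_transpose :: "complex^'n^'m \<Rightarrow> complex^'m^'n" where
  "conj_transpose A = (\<chi> i j. cnj (A $ j $ i))"

definition hermitian :: "complex^'n^'n \<Rightarrow> bool" where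
  "hermitian A \<longleftrightarrow> conj_transpose A = A"

definition psd :: "complex^'n^'n \<Rightarrow> bool" where
  "psd A \<longleftrightarrow> (\<forall>v::complex^'n.
     let q = (\<Sum>i\<in>UNIV. cnj (v $ i) * (A *v v) $ i) in Im q = 0 \<and> Re q \<ge> 0)"

definition Hmat :: "real \<Rightarrow> real \<Rightarrow> real \<Rightarrow> complex^3^3" where
  "Hmat a b c = (let x = sqrt (a^2 + b^2 + c^2);
     M = (vector [
       vector [complex_of_real (a^2+b^2), Complex (b*c) (a*x), Complex (-a*c) (b*x)],
       vector [Complex (b*c) (-a*x), complex_of_real (a^2+c^2), Complex (a*b) (c*x)],
       vector [Complex (-a*c) (-b*x), Complex (a*b) (-c*x), complex_of_real (b^2+c^2)]]
       :: complex^3^3)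
     in (\<chi> i j. M $ i $ j / complex_of_real x))"

end

theory Submission imports Defs begin

text \<open>Write H = D + iA with real matrices D and A. H is Hermitian iff D is symmetric and A is
  antisymmetric; then transpose H = D - iA, so the real part of H H^T = 0 reads D^2 = - A^2, and
  positive semidefiniteness of H makes D positive semidefinite. The antisymmetric 3x3 matrix A
  with entries a, b, c satisfies A^3 = - x^2 A for x = sqrt (a^2 + b^2 + c^2). Hence, for x > 0,
  - A^2 / x is a positive semidefinite square root of - A^2 commuting with D, and uniqueness of
  commuting positive semidefinite square roots gives D = - A^2 / x, which is the matrix Hmat a b c.
  Conversely, H = - A^2 / x + iA satisfies H H^T = 0 and H^2 = 2 x H, and the latter makes the
  Hermitian matrix H positive semidefinite.\<close>

section \<open>Positive semidefinite real matrices\<close>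

definition real_psd :: "real^'n^'n \<Rightarrow> bool" where
  "real_psd D \<longleftrightarrow> (\<forall>v. 0 \<le> v \<bullet> (D *v v))"

lemma symmetric_matrix_inner:
  fixes D :: "real^'n^'n"
  assumes "transpose D = D"
  shows "u \<bullet> (D *v v) = (D *v u) \<bullet> v"
  by (metis assms dot_lmul_matrix vector_transpose_matrix)

lemma real_psd_gram: "real_psd (A ** transpose A)"
  unfolding real_psd_def
  by (metis dot_lmul_matrix inner_ge_zero matrix_vector_mul_assoc transpose_matrix_vector)

lemma real_psd_scaleR: "real_psd D \<Longrightarrow> 0 \<le> k \<Longrightarrow> real_psd (k *\<^sub>R D)"
  unfolding real_psd_def by (metis inner_scaleR_right scaleR_matrix_vector_assoc mult_nonneg_nonneg)

lemma nonneg_quadratic_linear_coeff_eq_0: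
  fixes N C :: real
  assumes quad: "\<And>s. 0 \<le> 2 * s * N + s\<^sup>2 * C" and "C \<ge> 0"
  shows "N = 0"
proof -
  define s where "s = - N / (C + 1)"
  have "s * (C + 1) = - N" using \<open>C \<ge> 0\<close> by (simp add: s_def)
  then have "(C + 1)\<^sup>2 * (2 * s * N + s\<^sup>2 * C) = - N\<^sup>2 * (C + 2)"
    by algebra
  moreover have "0 \<le> (C + 1)\<^sup>2 * (2 * s * N + s\<^sup>2 * C)" using quad by simp
  ultimately have "N\<^sup>2 * (C + 2) \<le> 0" by linarith
  then show "N = 0" using \<open>C \<ge> 0\<close> by (smt (verit) mult_pos_pos zero_less_power2)
qed

lemma real_psd_form_eq_0_imp_kernel:
  fixes D :: "real^'n^'n"
  assumes sym: "transpose D = D" and psd: "real_psd D" and form: "v \<bullet> (D *v v) = 0"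
  shows "D *v v = 0"
proof -
  define w where "w = D *v v"
  define C where "C = w \<bullet> (D *v w)"
  have "0 \<le> 2 * s * (w \<bullet> w) + s\<^sup>2 * C" for s
  proof -
    have "0 \<le> (v + s *\<^sub>R w) \<bullet> (D *v (v + s *\<^sub>R w))"
      using psd unfolding real_psd_def by blast
    also have "\<dots> = 2 * s * (w \<bullet> w) + s\<^sup>2 * C"
      using form symmetric_matrix_inner[OF sym, of v w]
      by (simp add: C_def w_def algebra_simps matrix_scaleR_vector_ac power2_eq_square inner_commute)
    finally show ?thesis .
  qed
  moreover have "C \<ge> 0" using psd unfolding real_psd_def C_def by blast
  ultimately have "w \<bullet> w = 0" by (rule nonneg_quadratic_linear_coeff_eq_0)
  then show ?thesis by (simp add: w_def)
qed

text \<open>For t = (D - E) v one gets (D + E) t = 0, which forces D t = E t = 0 and hence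
  t \<bullet> t = v \<bullet> (D - E) t = 0.\<close>

lemma real_psd_sqrt_unique:
  fixes D E :: "real^'n^'n"
  assumes "transpose D = D" "real_psd D" "transpose E = E" "real_psd E"
    and comm: "D ** E = E ** D" and sq: "D ** D = E ** E"
  shows "D = E"
proof (rule matrix_eq[THEN iffD2], rule allI)
  fix v
  define t where "t = D *v v - E *v v"
  have "D *v t + E *v t = (D ** D - E ** E + (E ** D - D ** E)) *v v"
    by (simp add: t_def matrix_vector_mul_assoc algebra_simps)
  then have "D *v t + E *v t = 0" by (simp add: sq comm)
  then have "t \<bullet> (D *v t) + t \<bullet> (E *v t) = 0" by (metis inner_add_right inner_zero_right)
  moreover have "t \<bullet> (D *v t) \<ge> 0" "t \<bullet> (E *v t) \<ge> 0"
    using assms unfolding real_psd_def by blast+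
  ultimately have "t \<bullet> (D *v t) = 0" "t \<bullet> (E *v t) = 0"
    by linarith+
  then have "D *v t = 0" "E *v t = 0"
    using real_psd_form_eq_0_imp_kernel[OF assms(1,2)] real_psd_form_eq_0_imp_kernel[OF assms(3,4)]
    by blast+
  then have "t \<bullet> t = 0"
    using symmetric_matrix_inner[OF assms(1), of v t] symmetric_matrix_inner[OF assms(3), of v t]
    by (simp add: t_def inner_diff_left)
  then show "D *v v = E *v v" by (simp add: t_def)
qed

lemma real_psd_square_eq_0:
  fixes D :: "real^'n^'n"
  assumes "transpose D = D" "real_psd D" "D ** D = 0"
  shows "D = 0"
proof (rule real_psd_sqrt_unique[OF assms(1,2)])
  show "transpose (0 :: real^'n^'n) = 0" "real_psd (0 :: real^'n^'n)"
    by (simp_all add: transpose_def vec_eq_iff real_psd_def)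
qed (simp_all add: assms(3))

lemma matrix_mul_minus_right:
  fixes A :: "'a::ring_1^'n^'m"
  shows "A ** (- B) = - (A ** B)"
  by (simp add: matrix_matrix_mult_def vec_eq_iff sum_negf)

lemma matrix_mul_minus_left:
  fixes A :: "'a::ring_1^'n^'m"
  shows "(- A) ** B = - (A ** B)"
  by (simp add: matrix_matrix_mult_def vec_eq_iff sum_negf)

lemma matrix_mul_scaleR_both:
  fixes A :: "'a::real_algebra_1^'n^'m"
  shows "(k *\<^sub>R A) ** (l *\<^sub>R B) = (k * l) *\<^sub>R (A ** B)"
  by (simp add: matrix_scalar_ac scalar_matrix_assoc mult.commute)

lemma transpose_square_antisymmetric:
  fixes A :: "'a::comm_ring_1^'n^'n"
  assumes "transpose A = - A"
  shows "transpose (A ** A) = A ** A"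
  by (simp add: assms matrix_transpose_mul matrix_mul_minus_left matrix_mul_minus_right)

section \<open>Complex matrices from their real and imaginary parts\<close>

definition cmatrix :: "real^'n^'m \<Rightarrow> real^'n^'m \<Rightarrow> complex^'n^'m" where
  "cmatrix D A = (\<chi> i j. Complex (D $ i $ j) (A $ i $ j))"

lemma cmatrix_Re_Im: "H = cmatrix (\<chi> i j. Re (H $ i $ j)) (\<chi> i j. Im (H $ i $ j))"
  by (simp add: cmatrix_def vec_eq_iff complex_eq_iff)

lemma cmatrix_eq_iff: "cmatrix D A = cmatrix D' A' \<longleftrightarrow> D = D' \<and> A = A'"
  by (auto simp: cmatrix_def vec_eq_iff complex_eq_iff)

lemma cmatrix_eq_0_iff [simp]: "cmatrix D A = 0 \<longleftrightarrow> D = 0 \<and> A = 0"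
  by (auto simp: cmatrix_def vec_eq_iff complex_eq_iff)

lemma transpose_cmatrix: "transpose (cmatrix D A) = cmatrix (transpose D) (transpose A)"
  by (simp add: cmatrix_def transpose_def vec_eq_iff)

lemma conj_transpose_cmatrix:
  "conj_transpose (cmatrix D A) = cmatrix (transpose D) (- transpose A)"
  by (simp add: conj_transpose_def cmatrix_def transpose_def vec_eq_iff complex_eq_iff)

lemma hermitian_cmatrix_iff:
  "hermitian (cmatrix D A) \<longleftrightarrow> transpose D = D \<and> transpose A = - A"
  by (metis hermitian_def conj_transpose_cmatrix cmatrix_eq_iff minus_minus)

lemma scaleR_cmatrix: "k *\<^sub>R cmatrix D A = cmatrix (k *\<^sub>R D) (k *\<^sub>R A)"
  by (simp add: cmatrix_def vec_eq_iff complex_eq_iff)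

lemma cmatrix_mult:
  "cmatrix D A ** cmatrix D' A' = cmatrix (D ** D' - A ** A') (D ** A' + A ** D')"
  by (simp add: cmatrix_def matrix_matrix_mult_def vec_eq_iff complex_eq_iff
      sum_subtractf sum.distrib)

lemma cmatrix_mult_transpose:
  fixes D A :: "real^'n^'n"
  assumes "transpose D = D" "transpose A = - A"
  shows "cmatrix D A ** transpose (cmatrix D A) = cmatrix (D ** D + A ** A) (A ** D - D ** A)"
  by (simp add: assms transpose_cmatrix cmatrix_mult matrix_mul_minus_right)

lemma real_psd_if_psd_cmatrix:
  fixes D A :: "real^'n^'n"
  assumes "psd (cmatrix D A)"
  shows "real_psd D"
  unfolding real_psd_def
proof
  fix v :: "real^'n"
  define w :: "complex^'n" where "w = (\<chi> i. complex_of_real (v $ i))"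
  have w_nth: "w $ i = complex_of_real (v $ i)" for i
    by (simp add: w_def)
  have Re_mult: "Re ((cmatrix D A *v w) $ i) = (D *v v) $ i" for i
    by (simp add: cmatrix_def matrix_vector_mult_def w_def)
  have "0 \<le> Re (\<Sum>i\<in>UNIV. cnj (w $ i) * (cmatrix D A *v w) $ i)"
    using assms unfolding psd_def Let_def by blast
  also have "\<dots> = v \<bullet> (D *v v)"
    by (simp add: w_nth Re_mult inner_vec_def)
  finally show "0 \<le> v \<bullet> (D *v v)" .
qed

text \<open>If H H = k H with k > 0, then the quadratic form of H at v is |H v|^2 / k.\<close>

lemma psd_if_hermitian_square_eq_scaleR:
  fixes H :: "complex^'n^'n"
  assumes herm: "hermitian H" and sq: "H ** H = k *\<^sub>R H" and k: "k > 0"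
  shows "psd H"
  unfolding psd_def Let_def
proof
  fix v :: "complex^'n"
  let ?q = "\<Sum>i\<in>UNIV. cnj (v $ i) * (H *v v) $ i"
  define w where "w = H *v v"
  have cnj_H: "cnj (H $ j $ i) = H $ i $ j" for i j
    using herm unfolding hermitian_def conj_transpose_def by (metis vec_lambda_beta)
  have cnj_w: "cnj (w $ j) = (\<Sum>i\<in>UNIV. cnj (v $ i) * H $ i $ j)" for j
    by (simp add: w_def matrix_vector_mult_def cnj_H mult.commute)
  have "(H ** H) *v v = k *\<^sub>R w"
    by (simp add: sq w_def matrix_vector_mult_def vec_eq_iff scaleR_sum_right)
  then have HHv: "((H ** H) *v v) $ i = complex_of_real k * w $ i" for i
    by (simp add: scaleR_conv_of_real[symmetric])
  have "complex_of_real k * (\<Sum>i\<in>UNIV. cnj (v $ i) * w $ i)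
      = (\<Sum>i\<in>UNIV. cnj (v $ i) * ((H ** H) *v v) $ i)"
    by (simp add: HHv sum_distrib_left mult_ac)
  also have "\<dots> = (\<Sum>i\<in>UNIV. \<Sum>j\<in>UNIV. cnj (v $ i) * H $ i $ j * w $ j)"
    unfolding matrix_vector_mul_assoc[symmetric] w_def[symmetric]
    by (simp add: matrix_vector_mult_def sum_distrib_left mult.assoc)
  also have "\<dots> = (\<Sum>j\<in>UNIV. w $ j * cnj (w $ j))"
    by (subst sum.swap) (simp add: cnj_w sum_distrib_left mult_ac)
  also have "\<dots> = complex_of_real (\<Sum>j\<in>UNIV. (cmod (w $ j))\<^sup>2)"
    by (simp add: complex_norm_square del: of_real_power)
  finally have "(\<Sum>i\<in>UNIV. cnj (v $ i) * w $ i)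
      = complex_of_real ((\<Sum>j\<in>UNIV. (cmod (w $ j))\<^sup>2) / k)"
    using k by (simp add: field_simps)
  then show "Im ?q = 0 \<and> 0 \<le> Re ?q"
    using k by (simp add: w_def sum_nonneg)
qed

lemma real_part_of_null_hermitian_psd:
  fixes D A :: "real^'n^'n"
  assumes "hermitian (cmatrix D A)" "psd (cmatrix D A)" "cmatrix D A ** transpose (cmatrix D A) = 0"
  shows "transpose D = D" "real_psd D" "D ** D = - (A ** A)"
proof -
  show D: "transpose D = D" and "real_psd D"
    using assms(1,2) by (simp_all add: hermitian_cmatrix_iff real_psd_if_psd_cmatrix)
  have "transpose A = - A"
    using assms(1) by (simp add: hermitian_cmatrix_iff)
  then show "D ** D = - (A ** A)"
    using assms(3) by (simp add: cmatrix_mult_transpose[OF D] add_eq_0_iff)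
qed

section \<open>The absolute value of an antisymmetric matrix\<close>

text \<open>If A is antisymmetric and A ** A ** A = - x^2 A with x > 0, then skew_abs x A is the
  positive semidefinite square root of A ** transpose A = - A ** A.\<close>

definition skew_abs :: "real \<Rightarrow> real^'n^'n \<Rightarrow> real^'n^'n" where
  "skew_abs x A = - inverse x *\<^sub>R (A ** A)"

lemma transpose_skew_abs: "transpose A = - A \<Longrightarrow> transpose (skew_abs x A) = skew_abs x A"
  unfolding skew_abs_def by (simp only: transpose_scalar transpose_square_antisymmetric)

lemma real_psd_skew_abs:
  assumes "transpose A = - A" "x \<ge> 0"
  shows "real_psd (skew_abs x A)"
proof -
  have "skew_abs x A = inverse x *\<^sub>R (A ** transpose A)"
    by (simp add: skew_abs_def assms(1) matrix_mul_minus_right)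
  then show ?thesis
    using assms(2) by (simp add: real_psd_gram real_psd_scaleR)
qed

lemma skew_abs_square:
  fixes A :: "real^'n^'n"
  assumes cube: "A ** (A ** A) = - (x\<^sup>2) *\<^sub>R A" and "x \<noteq> 0"
  shows "skew_abs x A ** skew_abs x A = - (A ** A)"
proof -
  have "(A ** A) ** (A ** A) = A ** (A ** (A ** A))"
    by (simp add: matrix_mul_assoc)
  also have "\<dots> = - (x\<^sup>2) *\<^sub>R (A ** A)"
    by (simp add: cube matrix_mul_minus_right matrix_mul_minus_left matrix_scalar_ac scalar_matrix_assoc)
  finally have "(A ** A) ** (A ** A) = - (x\<^sup>2) *\<^sub>R (A ** A)" .
  moreover have "- inverse x * - inverse x * - (x\<^sup>2) = - 1"
    using \<open>x \<noteq> 0\<close> by (simp add: field_simps power2_eq_square)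
  ultimately show ?thesis
    by (simp only: skew_abs_def matrix_mul_scaleR_both scaleR_scaleR) simp
qed

lemma skew_abs_mult_eq_scaleR:
  fixes A :: "real^'n^'n"
  assumes cube: "A ** (A ** A) = - (x\<^sup>2) *\<^sub>R A" and "x \<noteq> 0"
  shows "skew_abs x A ** A = x *\<^sub>R A" "A ** skew_abs x A = x *\<^sub>R A"
proof -
  have "- inverse x * - (x\<^sup>2) = x"
    using \<open>x \<noteq> 0\<close> by (simp add: power2_eq_square)
  then show "skew_abs x A ** A = x *\<^sub>R A" "A ** skew_abs x A = x *\<^sub>R A"
    by (simp_all add: skew_abs_def cube matrix_mul_assoc[symmetric] matrix_scalar_ac
        scalar_matrix_assoc[symmetric] matrix_mul_minus_left matrix_mul_minus_right)
qed

lemma real_psd_sqrt_eq_skew_abs: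
  fixes A D :: "real^'n^'n"
  assumes antisym: "transpose A = - A" and cube: "A ** (A ** A) = - (x\<^sup>2) *\<^sub>R A" and "x > 0"
    and D: "transpose D = D" "real_psd D" and DD: "D ** D = - (A ** A)"
  shows "D = skew_abs x A"
proof (rule real_psd_sqrt_unique[OF D])
  show "transpose (skew_abs x A) = skew_abs x A" "real_psd (skew_abs x A)"
    using antisym \<open>x > 0\<close> by (simp_all add: transpose_skew_abs real_psd_skew_abs)
  show "D ** D = skew_abs x A ** skew_abs x A"
    using skew_abs_square[OF cube] \<open>x > 0\<close> DD by simp
  have "skew_abs x A = inverse x *\<^sub>R (D ** D)"
    by (simp add: skew_abs_def DD)
  then show "D ** skew_abs x A = skew_abs x A ** D"
    by (simp add: matrix_scalar_ac scalar_matrix_assoc[symmetric] matrix_mul_assoc)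
qed

lemma hermitian_cmatrix_skew_abs:
  "transpose A = - A \<Longrightarrow> hermitian (cmatrix (skew_abs x A) A)"
  by (simp add: hermitian_cmatrix_iff transpose_skew_abs)

lemma cmatrix_skew_abs_mult_transpose:
  fixes A :: "real^'n^'n"
  assumes antisym: "transpose A = - A" and cube: "A ** (A ** A) = - (x\<^sup>2) *\<^sub>R A" and "x \<noteq> 0"
  shows "cmatrix (skew_abs x A) A ** transpose (cmatrix (skew_abs x A) A) = 0"
  by (simp add: cmatrix_mult_transpose[OF transpose_skew_abs[OF antisym] antisym]
      skew_abs_square[OF cube] skew_abs_mult_eq_scaleR[OF cube] \<open>x \<noteq> 0\<close>)

lemma cmatrix_skew_abs_square:
  fixes A :: "real^'n^'n"
  assumes cube: "A ** (A ** A) = - (x\<^sup>2) *\<^sub>R A" and "x \<noteq> 0"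
  defines "H \<equiv> cmatrix (skew_abs x A) A"
  shows "H ** H = (2 * x) *\<^sub>R H"
proof -
  have "(2 * x) *\<^sub>R skew_abs x A = - 2 *\<^sub>R (A ** A)"
    using \<open>x \<noteq> 0\<close> by (simp add: skew_abs_def)
  then have re: "skew_abs x A ** skew_abs x A - A ** A = (2 * x) *\<^sub>R skew_abs x A"
    by (simp add: skew_abs_square[OF cube \<open>x \<noteq> 0\<close>] scaleR_2)
  have im: "skew_abs x A ** A + A ** skew_abs x A = (2 * x) *\<^sub>R A"
    by (simp only: skew_abs_mult_eq_scaleR[OF cube \<open>x \<noteq> 0\<close>] scaleR_add_left[symmetric] mult_2)
  show ?thesis
    by (simp only: H_def cmatrix_mult re im scaleR_cmatrix)
qed

lemma psd_cmatrix_skew_abs: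
  fixes A :: "real^'n^'n"
  assumes antisym: "transpose A = - A" and cube: "A ** (A ** A) = - (x\<^sup>2) *\<^sub>R A" and "x > 0"
  shows "psd (cmatrix (skew_abs x A) A)"
proof (rule psd_if_hermitian_square_eq_scaleR)
  show "hermitian (cmatrix (skew_abs x A) A)"
    using antisym by (rule hermitian_cmatrix_skew_abs)
  show "cmatrix (skew_abs x A) A ** cmatrix (skew_abs x A) A = (2 * x) *\<^sub>R cmatrix (skew_abs x A) A"
    using cube \<open>x > 0\<close> by (simp add: cmatrix_skew_abs_square)
  show "2 * x > 0"
    using \<open>x > 0\<close> by simp
qed

section \<open>Antisymmetric 3x3 matrices\<close>

definition skew3 :: "real \<Rightarrow> real \<Rightarrow> real \<Rightarrow> real^3^3" where
  "skew3 a b c = vector [vector [0, a, b], vector [-a, 0, c], vector [-b, -c, 0]]"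

lemma skew3_nth:
  "skew3 a b c $ 1 $ 1 = 0" "skew3 a b c $ 1 $ 2 = a" "skew3 a b c $ 1 $ 3 = b"
  "skew3 a b c $ 2 $ 1 = -a" "skew3 a b c $ 2 $ 2 = 0" "skew3 a b c $ 2 $ 3 = c"
  "skew3 a b c $ 3 $ 1 = -b" "skew3 a b c $ 3 $ 2 = -c" "skew3 a b c $ 3 $ 3 = 0"
  by (simp_all add: skew3_def)

lemma transpose_skew3: "transpose (skew3 a b c) = - skew3 a b c"
  by (simp add: transpose_def vec_eq_iff forall_3 skew3_nth)

lemma skew3_eq_0_iff: "skew3 a b c = 0 \<longleftrightarrow> (a, b, c) = (0, 0, 0)"
  by (auto simp: vec_eq_iff forall_3 skew3_nth)

lemma antisymmetric_eq_skew3: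
  fixes A :: "real^3^3"
  assumes "transpose A = - A"
  shows "A = skew3 (A $ 1 $ 2) (A $ 1 $ 3) (A $ 2 $ 3)"
proof -
  have h: "A $ j $ i = - A $ i $ j" for i j
    using arg_cong[OF assms, of "\<lambda>M. M $ i $ j"] by (simp add: transpose_def)
  have "A $ i $ i = 0" for i
    using h[of i i] by simp
  moreover have "A $ 2 $ 1 = - A $ 1 $ 2" "A $ 3 $ 1 = - A $ 1 $ 3" "A $ 3 $ 2 = - A $ 2 $ 3"
    using h by blast+
  ultimately show ?thesis
    by (simp add: vec_eq_iff forall_3 skew3_nth)
qed

lemma skew3_cube:
  "skew3 a b c ** (skew3 a b c ** skew3 a b c) = - (a\<^sup>2 + b\<^sup>2 + c\<^sup>2) *\<^sub>R skew3 a b c"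
  by (simp add: vec_eq_iff forall_3 matrix_matrix_mult_def sum_3 skew3_nth algebra_simps
      power2_eq_square)

lemma sqrt_sum_squares3_pos: "(a, b, c) \<noteq> (0, 0, 0) \<Longrightarrow> 0 < sqrt (a\<^sup>2 + b\<^sup>2 + c\<^sup>2)"
  by (simp add: add_nonneg_eq_0_iff add_pos_nonneg order_le_neq_trans)

lemma skew3_cube_sqrt:
  fixes a b c :: real
  defines "x \<equiv> sqrt (a\<^sup>2 + b\<^sup>2 + c\<^sup>2)"
  shows "skew3 a b c ** (skew3 a b c ** skew3 a b c) = - (x\<^sup>2) *\<^sub>R skew3 a b c"
  by (simp add: x_def skew3_cube)

lemma hermitian_eq_cmatrix_skew3:
  fixes H :: "complex^3^3"
  assumes "hermitian H"
  obtains D a b c where "H = cmatrix D (skew3 a b c)"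
proof -
  obtain D A where H: "H = cmatrix D A"
    using cmatrix_Re_Im by blast
  with assms have "transpose A = - A"
    by (simp add: hermitian_cmatrix_iff)
  then have "A = skew3 (A $ 1 $ 2) (A $ 1 $ 3) (A $ 2 $ 3)"
    by (rule antisymmetric_eq_skew3)
  with H have "H = cmatrix D (skew3 (A $ 1 $ 2) (A $ 1 $ 3) (A $ 2 $ 3))"
    by simp
  then show ?thesis
    by (rule that)
qed

lemma Hmat_eq_cmatrix:
  assumes "(a, b, c) \<noteq> (0, 0, 0)"
  shows "Hmat a b c = cmatrix (skew_abs (sqrt (a\<^sup>2 + b\<^sup>2 + c\<^sup>2)) (skew3 a b c)) (skew3 a b c)"
proof -
  have "sqrt (a\<^sup>2 + b\<^sup>2 + c\<^sup>2) \<noteq> 0"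
    using sqrt_sum_squares3_pos[OF assms] by simp
  then show ?thesis
    unfolding Hmat_def Let_def
    by (simp add: skew_abs_def cmatrix_def vec_eq_iff forall_3 matrix_matrix_mult_def sum_3
        skew3_nth complex_eq_iff field_simps power2_eq_square)
qed

lemma Hmat_hermitian_psd_null:
  assumes abc: "(a, b, c) \<noteq> (0, 0, 0)"
  shows "hermitian (Hmat a b c)" "psd (Hmat a b c)" "Hmat a b c ** transpose (Hmat a b c) = 0"
proof -
  note cube = skew3_cube_sqrt[of a b c] and x_pos = sqrt_sum_squares3_pos[OF abc]
  show "hermitian (Hmat a b c)"
    unfolding Hmat_eq_cmatrix[OF abc] by (rule hermitian_cmatrix_skew_abs[OF transpose_skew3])
  show "psd (Hmat a b c)"
    unfolding Hmat_eq_cmatrix[OF abc] by (rule psd_cmatrix_skew_abs[OF transpose_skew3 cube x_pos])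
  show "Hmat a b c ** transpose (Hmat a b c) = 0"
    unfolding Hmat_eq_cmatrix[OF abc]
    by (rule cmatrix_skew_abs_mult_transpose[OF transpose_skew3 cube]) (use x_pos in simp)
qed

lemma eq_0_or_Hmat_if_hermitian_psd_null:
  fixes H :: "complex^3^3"
  assumes "hermitian H" "psd H" "H ** transpose H = 0"
  shows "H = 0 \<or> (\<exists>a b c :: real. (a, b, c) \<noteq> (0, 0, 0) \<and> H = Hmat a b c)"
proof -
  obtain D a b c where H: "H = cmatrix D (skew3 a b c)"
    using hermitian_eq_cmatrix_skew3[OF assms(1)] by blast
  note D = real_part_of_null_hermitian_psd[OF assms[unfolded H]]
  show ?thesis
  proof (cases "(a, b, c) = (0, 0, 0)")
    case True
    then have A: "skew3 a b c = 0"
      by (simp add: skew3_eq_0_iff)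
    then have "D ** D = 0"
      using D(3) by simp
    with D(1,2) have "D = 0"
      by (rule real_psd_square_eq_0)
    with A show ?thesis
      by (simp add: H)
  next
    case False
    have "D = skew_abs (sqrt (a\<^sup>2 + b\<^sup>2 + c\<^sup>2)) (skew3 a b c)"
      by (rule real_psd_sqrt_eq_skew_abs[OF transpose_skew3 skew3_cube_sqrt
            sqrt_sum_squares3_pos[OF False] D])
    then have "H = Hmat a b c"
      by (simp add: H Hmat_eq_cmatrix[OF False])
    with False show ?thesis
      by blast
  qed
qed

theorem mainTheorem10:
  fixes H0 :: "complex^3^3"
  shows "(hermitian H0 \<and> psd H0 \<and> H0 ** transpose H0 = 0) \<longleftrightarrow>
    (H0 = 0 \<or> (\<exists>a b c :: real. (a, b, c) \<noteq> (0, 0, 0) \<and> H0 = Hmat a b c))"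
proof
  assume "hermitian H0 \<and> psd H0 \<and> H0 ** transpose H0 = 0"
  then show "H0 = 0 \<or> (\<exists>a b c :: real. (a, b, c) \<noteq> (0, 0, 0) \<and> H0 = Hmat a b c)"
    using eq_0_or_Hmat_if_hermitian_psd_null by blast
next
  have "hermitian (0 :: complex^3^3)" "psd (0 :: complex^3^3)"
    by (simp_all add: hermitian_def conj_transpose_def vec_eq_iff psd_def)
  moreover assume "H0 = 0 \<or> (\<exists>a b c :: real. (a, b, c) \<noteq> (0, 0, 0) \<and> H0 = Hmat a b c)"
  ultimately show "hermitian H0 \<and> psd H0 \<and> H0 ** transpose H0 = 0"
    using Hmat_hermitian_psd_null by auto
qed

end
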